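(* Let $\Delta$ be a positive integer, let $$\delta_{\Delta} = \max \left\{\sin \left(\tfrac{\alpha}{2}\right) \cos \left(\Delta \tfrac{\alpha}{2}\right) : 0 < \alpha < \tfrac{2 \pi}{3 \Delta} \right\},$$ and let $\beta \in \bigcup_{a \in \overline{B}(1, \delta_{\Delta})} \frac{1}{a} \overline{B}(1, \delta_{\Delta})$. Then $Z_{\mathrm{Ising}}(G; \beta) \ne 0$ for every graph $G$ with maximum degree at most $\Delta$.
   Context: Graphs are undirected and may have multiple edges or loops. $Z_{\mathrm{Ising}}(G;\beta)=\sum_{\sigma\colon V\to\{0,1\}}\beta^{m(\sigma)}$ with $m(\sigma)$ the number of monochromatic edges of $G=(V,E)$ under $\sigma$. $\overline{B}(x,r)=\{z\in\mathbb{C}:|z-x|\le r\}$, and $\frac1a\overline{B}(1,\delta)=\{w/a: w\in\overline{B}(1,\delta)\}$. *)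

theory Defs
  imports "HOL-Analysis.Analysis" "HOL-Library.Multiset"
begin

text \<open>A (multi)graph with loops: a finite vertex set V and a finite multiset E of edges,
  each edge given by its two endpoints (orientation is irrelevant).\<close>

definition multigraph :: "'a set \<Rightarrow> ('a \<times> 'a) multiset \<Rightarrow> bool" where
  "multigraph V E \<longleftrightarrow> finite V \<and> (\<forall>e \<in># E. fst e \<in> V \<and> snd e \<in> V)"

definition degree :: "('a \<times> 'a) multiset \<Rightarrow> 'a \<Rightarrow> nat" where
  "degree E v = (\<Sum>e \<in># E. (if fst e = v then 1 else 0) + (if snd e = v then 1 else 0))"

definition max_degree_le :: "'a set \<Rightarrow> ('a \<times> 'a) multiset \<Rightarrow> nat \<Rightarrow> bool" where
  "max_degree_le V E D \<longleftrightarrow> (\<forall>v \<in> V. degree E v \<le> D)"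

definition mono_edges :: "('a \<times> 'a) multiset \<Rightarrow> ('a \<Rightarrow> bool) \<Rightarrow> nat" where
  "mono_edges E \<sigma> = size (filter_mset (\<lambda>e. \<sigma> (fst e) = \<sigma> (snd e)) E)"

text \<open>Ising partition function; spins \<open>{0,1}\<close> are encoded as bool.\<close>
definition Z_Ising :: "'a set \<Rightarrow> ('a \<times> 'a) multiset \<Rightarrow> complex \<Rightarrow> complex" where
  "Z_Ising V E \<beta> = (\<Sum>\<sigma> \<in> (V \<rightarrow>\<^sub>E (UNIV :: bool set)). \<beta> ^ mono_edges E \<sigma>)"

definition delta_Delta :: "nat \<Rightarrow> real" where
  "delta_Delta D = (SUP \<alpha> \<in> {0<..<2 * pi / (3 * real D)}.
      sin (\<alpha> / 2) * cos (real D * \<alpha> / 2))"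

end

theory Submission
  imports Defs
begin

(* Write \<beta> = w / a with |w - 1|, |a - 1| \<le> \<delta>, and give monochromatic edges weight w and the
   other edges weight a; this multiplies Z_Ising(\<beta>) by a^|E|.  Choose \<alpha> with D \<alpha> < \<pi> and
   \<delta> \<le> sin(\<alpha>/2) cos((D-1) \<alpha>/2).  Allowing some edge endpoints to be pinned to a fixed spin,
   one shows by induction on the number of free vertices that (i) the partition function never
   vanishes and (ii) flipping the pinned spin at one end of an edge rotates it by at most \<alpha>.
   For (ii), summing over the spin of the other end x writes the partition function as
   w1 u1 + w2 u2 with edge weights w1, w2, where u1, u2 pin x to the two spins; by (ii) for the
   at most D - 1 remaining edges at x, the angle between u1 and u2 is at most (D-1) \<alpha>, so
   |u1 + u2| \<ge> cos((D-1) \<alpha>/2) (|u1| + |u2|) and perturbing the weights by \<delta> moves the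
   argument by at most \<alpha>/2.  For (i), pinning any vertex splits the partition function into two
   terms whose arguments differ by at most D \<alpha> < \<pi>, so they cannot cancel. *)

lemma abs_Arg_mult_le: "\<bar>Arg (z * w)\<bar> \<le> \<bar>Arg z\<bar> + \<bar>Arg w\<bar>"
proof (cases "z = 0 \<or> w = 0")
  case True
  then show ?thesis by auto
next
  case False
  show ?thesis
  proof (cases "Arg z + Arg w \<in> {-pi<..pi}")
    case True
    then show ?thesis using Arg_times[OF True] False by simp
  next
    case outside: False
    have "\<bar>Arg (z * w)\<bar> \<le> pi" using mpi_less_Arg[of "z * w"] Arg_le_pi[of "z * w"] by auto
    also have "pi \<le> \<bar>Arg z\<bar> + \<bar>Arg w\<bar>" using outside by auto
    finally show ?thesis .
  qed
qed

lemma abs_Arg_divide_le: "\<bar>Arg (z / w)\<bar> \<le> \<bar>Arg z\<bar> + \<bar>Arg w\<bar>"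
proof -
  have "\<bar>Arg (inverse w)\<bar> = \<bar>Arg w\<bar>" by (simp add: Arg_inverse)
  then show ?thesis using abs_Arg_mult_le[of z "inverse w"] by (simp add: divide_inverse)
qed

lemma abs_Arg_divide_trans:
  assumes "(z2 :: complex) \<noteq> 0"
  shows "\<bar>Arg (z1 / z3)\<bar> \<le> \<bar>Arg (z1 / z2)\<bar> + \<bar>Arg (z2 / z3)\<bar>"
proof -
  have "z1 / z3 = (z1 / z2) * (z2 / z3)" using assms by simp
  then show ?thesis using abs_Arg_mult_le[of "z1 / z2" "z2 / z3"] by (simp only:)
qed

lemma abs_Arg_le_arcsin:
  assumes "cmod (z - 1) \<le> s" "s < 1"
  shows "\<bar>Arg z\<bar> \<le> arcsin s"
proof -
  have s_nonneg: "0 \<le> s" using assms(1) norm_ge_zero order_trans by blast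
  have "Re z \<ge> 1 - cmod (z - 1)" using abs_Re_le_cmod[of "z - 1"] by simp
  then have "Re z > 0" using assms by linarith
  define t where "t = Arg z"
  define r where "r = cmod z"
  have z: "z = rcis r t" unfolding r_def t_def by (simp add: rcis_cmod_Arg)
  have t_small: "\<bar>t\<bar> < pi / 2" using Arg_Re_pos[of z] \<open>Re z > 0\<close> t_def by auto
  have "(cmod (z - 1))\<^sup>2 = (Re z - 1)\<^sup>2 + (Im z)\<^sup>2" by (simp add: cmod_power2)
  also have "\<dots> = (r * cos t - 1)\<^sup>2 + (r * sin t)\<^sup>2" by (subst (1 2) z) simp
  also have "\<dots> = (r - cos t)\<^sup>2 + (sin t)\<^sup>2"
    by (simp add: power2_eq_square algebra_simps)
       (metis add.commute distrib_left mult.right_neutral sin_cos_squared_add power2_eq_square)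
  finally have "(sin t)\<^sup>2 \<le> (cmod (z - 1))\<^sup>2" by simp
  also have "\<dots> \<le> s\<^sup>2" using assms(1) by (simp add: power_mono)
  finally have "\<bar>sin t\<bar>\<^sup>2 \<le> s\<^sup>2" by simp
  then have "\<bar>sin t\<bar> \<le> s" using s_nonneg by (rule power2_le_imp_le)
  moreover have "sin \<bar>t\<bar> \<le> \<bar>sin t\<bar>" by (cases "t < 0") auto
  moreover have "arcsin (sin \<bar>t\<bar>) = \<bar>t\<bar>" using t_small by (intro arcsin_sin) auto
  ultimately have "\<bar>t\<bar> \<le> arcsin s"
    using arcsin_le_arcsin[of "sin \<bar>t\<bar>" s] assms(2) sin_ge_minus_one[of "\<bar>t\<bar>"] by auto
  then show ?thesis by (simp add: t_def)
qed

lemma abs_Arg_divide_le_arcsin: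
  assumes "cmod (z - u) \<le> s * cmod u" "s < 1" "u \<noteq> 0"
  shows "\<bar>Arg (z / u)\<bar> \<le> arcsin s"
proof -
  have "z / u - 1 = (z - u) / u" using assms(3) by (simp add: field_simps)
  then have "cmod (z / u - 1) \<le> s" using assms by (simp add: norm_divide divide_le_eq)
  then show ?thesis using assms(2) by (rule abs_Arg_le_arcsin)
qed

lemma cos_half_mult_norm_add_le:
  fixes u1 u2 :: complex
  assumes angle: "\<bar>Arg (u1 / u2)\<bar> \<le> \<theta>" and "\<theta> \<le> pi"
  shows "cos (\<theta> / 2) * (cmod u1 + cmod u2) \<le> cmod (u1 + u2)"
proof -
  define c where "c = cos (\<theta> / 2)"
  have c_nonneg: "0 \<le> c" unfolding c_def using angle \<open>\<theta> \<le> pi\<close> by (intro cos_ge_zero) auto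
  show ?thesis
  proof (cases "u2 = 0")
    case True
    then show ?thesis using mult_left_le_one_le[OF norm_ge_zero c_nonneg] by (simp add: c_def)
  next
    case False
    define z where "z = u1 / u2"
    define t where "t = Arg z"
    define r where "r = cmod z"
    have z: "z = rcis r t" unfolding r_def t_def by (simp add: rcis_cmod_Arg)
    have "cos \<theta> \<le> cos \<bar>t\<bar>"
      using angle \<open>\<theta> \<le> pi\<close> by (intro cos_monotone_0_pi_le) (auto simp: t_def z_def)
    then have cos_t: "2 * c\<^sup>2 - 1 \<le> cos t"
      unfolding c_def using cos_double_cos[of "\<theta> / 2"] by (cases "t < 0") auto
    have "(cmod (1 + z))\<^sup>2 = (1 + r * cos t)\<^sup>2 + (r * sin t)\<^sup>2" by (simp add: z cmod_power2)
    also have "\<dots> = 1 + 2 * r * cos t + r\<^sup>2 * ((sin t)\<^sup>2 + (cos t)\<^sup>2)" by algebra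
    finally have norm_sq: "(cmod (1 + z))\<^sup>2 = 1 + 2 * r * cos t + r\<^sup>2" by simp
    have "(c * (1 + r))\<^sup>2 = 1 + 2 * r * (2 * c\<^sup>2 - 1) + r\<^sup>2 - (1 - c\<^sup>2) * (r - 1)\<^sup>2"
      by (simp add: power2_eq_square algebra_simps)
    also have "\<dots> \<le> 1 + 2 * r * (2 * c\<^sup>2 - 1) + r\<^sup>2"
      unfolding c_def by (simp add: abs_square_le_1)
    also have "\<dots> \<le> (cmod (1 + z))\<^sup>2"
      unfolding norm_sq using cos_t by (simp add: r_def mult_left_mono)
    finally have "c * (1 + r) \<le> cmod (1 + z)" by (rule power2_le_imp_le) simp
    then have "cmod u2 * (c * (1 + r)) \<le> cmod u2 * cmod (1 + z)" by (rule mult_left_mono) simp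
    moreover have "u1 + u2 = u2 * (1 + z)" using False by (simp add: z_def field_simps)
    then have "cmod (u1 + u2) = cmod u2 * cmod (1 + z)" by (simp add: norm_mult)
    moreover have "cmod u1 = cmod u2 * r" using False by (simp add: r_def z_def norm_divide)
    ultimately show ?thesis by (simp add: c_def algebra_simps)
  qed
qed

lemma norm_perturbed_sum_le:
  fixes u1 u2 x1 x2 :: complex
  assumes angle: "\<bar>Arg (u1 / u2)\<bar> \<le> \<theta>" and "\<theta> < pi"
    and x: "cmod (x1 - 1) \<le> \<epsilon> * cos (\<theta> / 2)" "cmod (x2 - 1) \<le> \<epsilon> * cos (\<theta> / 2)"
  shows "cmod (x1 * u1 + x2 * u2 - (u1 + u2)) \<le> \<epsilon> * cmod (u1 + u2)"
proof -
  define c where "c = cos (\<theta> / 2)"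
  have c_pos: "0 < c" unfolding c_def using angle \<open>\<theta> < pi\<close> by (intro cos_gt_zero_pi) auto
  have "0 \<le> \<epsilon> * c" using x(1) norm_ge_zero[of "x1 - 1"] unfolding c_def by linarith
  then have \<epsilon>_nonneg: "0 \<le> \<epsilon>" using c_pos by (simp add: zero_le_mult_iff)
  have "x1 * u1 + x2 * u2 - (u1 + u2) = (x1 - 1) * u1 + (x2 - 1) * u2" by (simp add: algebra_simps)
  then have "cmod (x1 * u1 + x2 * u2 - (u1 + u2)) \<le> cmod (x1 - 1) * cmod u1 + cmod (x2 - 1) * cmod u2"
    by (metis norm_mult norm_triangle_ineq)
  also have "\<dots> \<le> (\<epsilon> * c) * cmod u1 + (\<epsilon> * c) * cmod u2"
    using x unfolding c_def by (intro add_mono mult_right_mono) auto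
  also have "\<dots> = \<epsilon> * (c * (cmod u1 + cmod u2))" by (simp add: algebra_simps)
  also have "\<dots> \<le> \<epsilon> * cmod (u1 + u2)"
    unfolding c_def using angle \<open>\<theta> < pi\<close> \<epsilon>_nonneg
    by (intro mult_left_mono cos_half_mult_norm_add_le) auto
  finally show ?thesis .
qed

lemma abs_Arg_perturbed_sums_le:
  fixes u1 u2 a1 a2 b1 b2 :: complex and \<theta> \<alpha> :: real
  defines "\<delta> \<equiv> sin (\<alpha> / 2) * cos (\<theta> / 2)"
  assumes angle: "\<bar>Arg (u1 / u2)\<bar> \<le> \<theta>" and "\<theta> < pi" and "0 < \<alpha>" "\<alpha> < pi"
    and a: "cmod (a1 - 1) \<le> \<delta>" "cmod (a2 - 1) \<le> \<delta>"
    and b: "cmod (b1 - 1) \<le> \<delta>" "cmod (b2 - 1) \<le> \<delta>"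
  shows "\<bar>Arg ((a1 * u1 + a2 * u2) / (b1 * u1 + b2 * u2))\<bar> \<le> \<alpha>"
proof -
  define U where "U = u1 + u2"
  define s where "s = sin (\<alpha> / 2)"
  have close: "cmod (a1 * u1 + a2 * u2 - U) \<le> s * cmod U" "cmod (b1 * u1 + b2 * u2 - U) \<le> s * cmod U"
    unfolding U_def s_def using angle \<open>\<theta> < pi\<close> a b unfolding \<delta>_def
    by (blast intro: norm_perturbed_sum_le)+
  show ?thesis
  proof (cases "U = 0")
    case True
    then show ?thesis using close \<open>0 < \<alpha>\<close> by (simp add: Arg_zero)
  next
    case False
    have "s < 1" unfolding s_def using \<open>0 < \<alpha>\<close> \<open>\<alpha> < pi\<close> sin_monotone_2pi[of "\<alpha> / 2" "pi / 2"] by simp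
    moreover have "arcsin s = \<alpha> / 2" unfolding s_def using \<open>0 < \<alpha>\<close> \<open>\<alpha> < pi\<close> by (intro arcsin_sin) auto
    ultimately have "\<bar>Arg ((a1 * u1 + a2 * u2) / U)\<bar> \<le> \<alpha> / 2" "\<bar>Arg ((b1 * u1 + b2 * u2) / U)\<bar> \<le> \<alpha> / 2"
      using abs_Arg_divide_le_arcsin[OF close(1)] abs_Arg_divide_le_arcsin[OF close(2)] False by auto
    moreover have ratio: "(a1 * u1 + a2 * u2) / (b1 * u1 + b2 * u2)
        = ((a1 * u1 + a2 * u2) / U) / ((b1 * u1 + b2 * u2) / U)"
      using False by (cases "b1 * u1 + b2 * u2 = 0") simp_all
    ultimately show ?thesis
      unfolding ratio using abs_Arg_divide_le[of "(a1 * u1 + a2 * u2) / U" "(b1 * u1 + b2 * u2) / U"]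
      by linarith
  qed
qed

datatype 'a endpoint = Free 'a | Pinned bool

fun spin :: "('a \<Rightarrow> bool) \<Rightarrow> 'a endpoint \<Rightarrow> bool" where
  "spin \<sigma> (Free v) = \<sigma> v"
| "spin \<sigma> (Pinned b) = b"

definition edge_weight :: "complex \<Rightarrow> complex \<Rightarrow> bool \<Rightarrow> bool \<Rightarrow> complex" where
  "edge_weight w a c d = (if c = d then w else a)"

(* A free endpoint outside F reads the junk value undefined of every \<sigma> in the extensional
   function space, so it behaves like a pinned endpoint. *)
definition Zpin :: "complex \<Rightarrow> complex \<Rightarrow> 'a set \<Rightarrow> ('a endpoint \<times> 'a endpoint) multiset \<Rightarrow> complex"
  where "Zpin w a F Es =
    (\<Sum>\<sigma> \<in> F \<rightarrow>\<^sub>E (UNIV :: bool set). \<Prod>e\<in>#Es. edge_weight w a (spin \<sigma> (fst e)) (spin \<sigma> (snd e)))"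

fun pin_endpoint :: "'a \<Rightarrow> bool \<Rightarrow> 'a endpoint \<Rightarrow> 'a endpoint" where
  "pin_endpoint x b (Free v) = (if v = x then Pinned b else Free v)"
| "pin_endpoint x b (Pinned c) = Pinned c"

definition pin_edge :: "'a \<Rightarrow> bool \<Rightarrow> 'a endpoint \<times> 'a endpoint \<Rightarrow> 'a endpoint \<times> 'a endpoint" where
  "pin_edge x b = map_prod (pin_endpoint x b) (pin_endpoint x b)"

definition pin :: "'a \<Rightarrow> bool \<Rightarrow> ('a endpoint \<times> 'a endpoint) multiset \<Rightarrow> ('a endpoint \<times> 'a endpoint) multiset"
  where "pin x b = image_mset (pin_edge x b)"

lemma pin_simps [simp]:
  "pin x b {#} = {#}"
  "pin x b (add_mset e M) = add_mset (pin_edge x b e) (pin x b M)"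
  "pin x b (M + N) = pin x b M + pin x b N"
  by (simp_all add: pin_def)

lemma spin_fun_upd: "spin (\<sigma>(x := b)) p = spin \<sigma> (pin_endpoint x b p)"
  by (cases p) auto

lemma spin_outside:
  assumes "\<sigma> \<in> F \<rightarrow>\<^sub>E (UNIV :: bool set)" "p \<notin> Free ` F"
  shows "spin \<sigma> p = spin (\<lambda>_. undefined) p"
  using assms by (cases p) (auto simp: PiE_def extensional_def)

lemma pin_endpoint_other: "p \<noteq> Free x \<Longrightarrow> pin_endpoint x b p = p"
  by (cases p) auto

lemma edge_weight_commute: "edge_weight w a c d = edge_weight w a d c"
  by (auto simp: edge_weight_def)

lemma Zpin_swap: "Zpin w a F (add_mset (q, p) M) = Zpin w a F (add_mset (p, q) M)"
  by (simp add: Zpin_def edge_weight_commute)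

lemma Zpin_add_mset_constant:
  assumes "\<And>\<sigma>. \<sigma> \<in> F \<rightarrow>\<^sub>E (UNIV :: bool set) \<Longrightarrow> spin \<sigma> p = c \<and> spin \<sigma> q = d"
  shows "Zpin w a F (add_mset (p, q) M) = edge_weight w a c d * Zpin w a F M"
  unfolding Zpin_def sum_distrib_left using assms by (intro sum.cong refl) simp

lemma Zpin_add_mset_pinned [simp]:
  "Zpin w a F (add_mset (Pinned c, Pinned d) M) = edge_weight w a c d * Zpin w a F M"
  by (rule Zpin_add_mset_constant) simp

lemma Zpin_split:
  assumes "finite F" "x \<in> F"
  shows "Zpin w a F Es = Zpin w a (F - {x}) (pin x True Es) + Zpin w a (F - {x}) (pin x False Es)"
proof -
  define F0 where "F0 = F - {x}"
  have F: "F = insert x F0" "x \<notin> F0" using assms by (auto simp: F0_def)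
  define h where "h = (\<lambda>\<sigma>. \<Prod>e\<in>#Es. edge_weight w a (spin \<sigma> (fst e)) (spin \<sigma> (snd e)))"
  have "Zpin w a F Es = sum h ((\<lambda>(y, g). g(x := y)) ` (UNIV \<times> (F0 \<rightarrow>\<^sub>E (UNIV :: bool set))))"
    by (simp add: Zpin_def h_def F PiE_insert_eq)
  also have "\<dots> = sum (h \<circ> (\<lambda>(y, g). g(x := y))) (UNIV \<times> (F0 \<rightarrow>\<^sub>E (UNIV :: bool set)))"
    by (rule sum.reindex) (use inj_combinator[OF F(2), of "\<lambda>_. UNIV :: bool set"] in simp)
  also have "\<dots> = (\<Sum>y\<in>UNIV. \<Sum>g\<in>F0 \<rightarrow>\<^sub>E (UNIV :: bool set). h (g(x := y)))"
    by (simp add: sum.cartesian_product split_beta)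
  also have "\<dots> = (\<Sum>y\<in>UNIV. Zpin w a F0 (pin x y Es))"
    unfolding Zpin_def h_def pin_def
    by (intro sum.cong refl) (simp add: multiset.map_comp o_def spin_fun_upd pin_edge_def)
  also have "\<dots> = Zpin w a F0 (pin x True Es) + Zpin w a F0 (pin x False Es)"
    by (simp add: UNIV_bool)
  finally show ?thesis by (simp add: F0_def)
qed

lemma degree_simps [simp]:
  "degree {#} v = 0"
  "degree (add_mset e M) v = (if fst e = v then 1 else 0) + (if snd e = v then 1 else 0) + degree M v"
  "degree (M + N) v = degree M v + degree N v"
  by (simp_all add: degree_def)

lemma degree_pin: "y \<noteq> x \<Longrightarrow> degree (pin x b Es) (Free y) = degree Es (Free y)"
proof (induction Es)
  case (add e Es)
  obtain p q where "e = (p, q)" by (cases e)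
  then show ?case using add by (cases p; cases q) (auto simp: pin_edge_def)
qed simp

lemma max_degree_le_pin:
  assumes "x \<notin> F"
  shows "max_degree_le (Free ` F) (pin x b Es + M) D \<longleftrightarrow> max_degree_le (Free ` F) (Es + M) D"
proof -
  have "degree (pin x b Es) (Free v) = degree Es (Free v)" if "v \<in> F" for v
    using assms that by (intro degree_pin) auto
  then show ?thesis by (simp add: max_degree_le_def)
qed

lemma max_degree_le_mono:
  assumes "max_degree_le V E D" "V' \<subseteq> V" "E' \<subseteq># E"
  shows "max_degree_le V' E' D"
proof -
  have "degree E' v \<le> degree E v" for v
    using degree_simps(3)[of E' "E - E'" v] subset_mset.add_diff_inverse[OF assms(3)] by simp
  then show ?thesis using assms(1,2) unfolding max_degree_le_def by (meson le_trans subsetD)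
qed

lemma max_degree_le_swap:
  "max_degree_le V (add_mset (q, p) M) D \<longleftrightarrow> max_degree_le V (add_mset (p, q) M) D"
  by (simp add: max_degree_le_def add_ac)

locale ising_disk =
  fixes w a :: complex and \<alpha> :: real and D :: nat
  assumes D_pos: "0 < D" and alpha_pos: "0 < \<alpha>" and D_alpha_less_pi: "real D * \<alpha> < pi"
    and w_close: "cmod (w - 1) \<le> sin (\<alpha> / 2) * cos ((real D - 1) * \<alpha> / 2)"
    and a_close: "cmod (a - 1) \<le> sin (\<alpha> / 2) * cos ((real D - 1) * \<alpha> / 2)"
begin

definition nonvanishing :: "'a set \<Rightarrow> bool" where
  "nonvanishing F \<longleftrightarrow> (\<forall>Es. max_degree_le (Free ` F) Es D \<longrightarrow> Zpin w a F Es \<noteq> 0)"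

definition flip_rotation_bounded :: "'a set \<Rightarrow> bool" where
  "flip_rotation_bounded F \<longleftrightarrow> (\<forall>c c' q M. max_degree_le (Free ` F) (add_mset (Pinned c, q) M) D \<longrightarrow>
     \<bar>Arg (Zpin w a F (add_mset (Pinned c, q) M) / Zpin w a F (add_mset (Pinned c', q) M))\<bar> \<le> \<alpha>)"

lemma alpha_less_pi: "\<alpha> < pi"
proof -
  have "\<alpha> \<le> real D * \<alpha>" using D_pos alpha_pos by simp
  then show ?thesis using D_alpha_less_pi by linarith
qed

lemma D_minus_1_alpha_less_pi: "(real D - 1) * \<alpha> < pi"
  using D_alpha_less_pi alpha_pos by (simp add: algebra_simps)

lemma edge_weight_close: "cmod (edge_weight w a c d - 1) \<le> sin (\<alpha> / 2) * cos ((real D - 1) * \<alpha> / 2)"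
  using w_close a_close by (simp add: edge_weight_def)

lemma sin_half_alpha: "0 < sin (\<alpha> / 2)" "sin (\<alpha> / 2) < 1"
  using alpha_pos alpha_less_pi sin_monotone_2pi[of "\<alpha> / 2" "pi / 2"] by (auto intro: sin_gt_zero)

lemma edge_weight_close_sin: "cmod (edge_weight w a c d - 1) \<le> sin (\<alpha> / 2)"
proof -
  have "sin (\<alpha> / 2) * cos ((real D - 1) * \<alpha> / 2) \<le> sin (\<alpha> / 2)"
    using sin_half_alpha by (intro mult_left_le) auto
  then show ?thesis using edge_weight_close[of c d] by linarith
qed

lemma edge_weight_nonzero: "edge_weight w a c d \<noteq> 0"
  using edge_weight_close_sin[of c d] sin_half_alpha by auto

lemma abs_Arg_edge_weight_le: "\<bar>Arg (edge_weight w a c d)\<bar> \<le> \<alpha> / 2"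
proof -
  have "\<bar>Arg (edge_weight w a c d)\<bar> \<le> arcsin (sin (\<alpha> / 2))"
    using edge_weight_close_sin sin_half_alpha(2) by (rule abs_Arg_le_arcsin)
  also have "\<dots> = \<alpha> / 2" using alpha_pos alpha_less_pi by (intro arcsin_sin) auto
  finally show ?thesis .
qed

lemma abs_Arg_edge_weight_divide_le: "\<bar>Arg (edge_weight w a c d / edge_weight w a c' d')\<bar> \<le> \<alpha>"
  using abs_Arg_divide_le[of "edge_weight w a c d" "edge_weight w a c' d'"]
    abs_Arg_edge_weight_le[of c d] abs_Arg_edge_weight_le[of c' d'] by linarith

lemma abs_Arg_pin_edge_le:
  assumes nv: "nonvanishing F" and fr: "flip_rotation_bounded F" and x: "x \<notin> F"
    and adm: "max_degree_le (Free ` F) (add_mset e N) D"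
  shows "\<bar>Arg (Zpin w a F (add_mset (pin_edge x True e) N) / Zpin w a F (add_mset (pin_edge x False e) N))\<bar>
    \<le> real (degree {#e#} (Free x)) * \<alpha>"
proof -
  obtain p q where e: "e = (p, q)" by (cases e)
  have adm_pin: "max_degree_le (Free ` F) (add_mset (pin_edge x b e) N) D" for b
    using max_degree_le_pin[OF x, of b "{#e#}" N] adm by simp
  have flip_left: "\<bar>Arg (Zpin w a F (add_mset (Pinned c, r) M) / Zpin w a F (add_mset (Pinned c', r) M))\<bar> \<le> \<alpha>"
    if "max_degree_le (Free ` F) (add_mset (Pinned c, r) M) D" for c c' r M
    using fr that unfolding flip_rotation_bounded_def by blast
  have flip_right: "\<bar>Arg (Zpin w a F (add_mset (r, Pinned c) M) / Zpin w a F (add_mset (r, Pinned c') M))\<bar> \<le> \<alpha>"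
    if "max_degree_le (Free ` F) (add_mset (r, Pinned c) M) D" for c c' r M
    using flip_left that by (simp add: Zpin_swap max_degree_le_swap)
  consider (none) "p \<noteq> Free x" "q \<noteq> Free x" | (left) "p = Free x" "q \<noteq> Free x"
    | (right) "p \<noteq> Free x" "q = Free x" | (loop) "p = Free x" "q = Free x" by blast
  then show ?thesis
  proof cases
    case none
    then have "pin_edge x True e = pin_edge x False e" by (simp add: e pin_edge_def pin_endpoint_other)
    moreover have "Zpin w a F (add_mset (pin_edge x False e) N) \<noteq> 0"
      using nv adm_pin unfolding nonvanishing_def by blast
    ultimately show ?thesis using none by (simp add: e)
  next
    case left
    then have "pin_edge x b e = (Pinned b, q)" for b by (simp add: e pin_edge_def pin_endpoint_other)
    then show ?thesis using flip_left adm_pin[of True] left e by simp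
  next
    case right
    then have "pin_edge x b e = (p, Pinned b)" for b by (simp add: e pin_edge_def pin_endpoint_other)
    then show ?thesis using flip_right adm_pin[of True] right e by simp
  next
    case loop
    then have "pin_edge x b e = (Pinned b, Pinned b)" for b by (simp add: e pin_edge_def)
    then show ?thesis
      using abs_Arg_edge_weight_divide_le[of True True False False] loop e alpha_pos
      by (cases "Zpin w a F N = 0") (simp_all add: Arg_zero)
  qed
qed

(* Switch the pinning at x edge by edge; M collects the edges already pinned to True. *)
lemma abs_Arg_pin_le:
  assumes nv: "nonvanishing F" and fr: "flip_rotation_bounded F" and x: "x \<notin> F"
    and "max_degree_le (Free ` F) (Es + M) D"
  shows "\<bar>Arg (Zpin w a F (pin x True Es + M) / Zpin w a F (pin x False Es + M))\<bar>
    \<le> real (degree Es (Free x)) * \<alpha>"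
  using assms(4)
proof (induction Es arbitrary: M)
  case empty
  then have "Zpin w a F M \<noteq> 0" using nv by (simp add: nonvanishing_def)
  then show ?case by simp
next
  case (add e Es)
  define e1 e0 where "e1 = pin_edge x True e" and "e0 = pin_edge x False e"
  define N where "N = pin x False Es + M"
  have "max_degree_le (Free ` F) (Es + add_mset e1 M) D"
    using add.prems max_degree_le_pin[OF x, of True "{#e#}" "Es + M"] by (simp add: e1_def add_ac)
  then have IH: "\<bar>Arg (Zpin w a F (add_mset e1 (pin x True Es + M)) / Zpin w a F (add_mset e1 N))\<bar>
      \<le> real (degree Es (Free x)) * \<alpha>"
    using add.IH[of "add_mset e1 M"] by (simp add: N_def)
  have adm_N: "max_degree_le (Free ` F) (add_mset e N) D"
    using add.prems max_degree_le_pin[OF x, of False Es "add_mset e M"] by (simp add: N_def)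
  have step: "\<bar>Arg (Zpin w a F (add_mset e1 N) / Zpin w a F (add_mset e0 N))\<bar>
      \<le> real (degree {#e#} (Free x)) * \<alpha>"
    unfolding e1_def e0_def using nv fr x adm_N by (rule abs_Arg_pin_edge_le)
  have "Zpin w a F (add_mset e1 N) \<noteq> 0"
    using nv max_degree_le_pin[OF x, of True "{#e#}" N] adm_N by (simp add: nonvanishing_def e1_def)
  from abs_Arg_divide_trans[OF this, of "Zpin w a F (add_mset e1 (pin x True Es + M))"
      "Zpin w a F (add_mset e0 N)"]
  have "\<bar>Arg (Zpin w a F (add_mset e1 (pin x True Es + M)) / Zpin w a F (add_mset e0 N))\<bar>
      \<le> (real (degree Es (Free x)) + real (degree {#e#} (Free x))) * \<alpha>"
    unfolding distrib_right using IH step by linarith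
  moreover have "pin x True (add_mset e Es) + M = add_mset e1 (pin x True Es + M)"
    by (simp add: e1_def)
  moreover have "pin x False (add_mset e Es) + M = add_mset e0 N"
    by (simp add: e0_def N_def)
  moreover have "real (degree (add_mset e Es) (Free x))
      = real (degree Es (Free x)) + real (degree {#e#} (Free x))"
    by simp
  ultimately show ?case by (simp only:)
qed

lemma nonvanishing_step:
  assumes "finite F"
    and IH: "\<And>x. x \<in> F \<Longrightarrow> nonvanishing (F - {x}) \<and> flip_rotation_bounded (F - {x})"
  shows "nonvanishing F"
  unfolding nonvanishing_def
proof (intro allI impI)
  fix Es assume adm: "max_degree_le (Free ` F) Es D"
  show "Zpin w a F Es \<noteq> 0"
  proof (cases "F = {}")
    case True
    then show ?thesis by (simp add: Zpin_def image_iff edge_weight_nonzero)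
  next
    case False
    then obtain x where x: "x \<in> F" by blast
    define u1 u0 where "u1 = Zpin w a (F - {x}) (pin x True Es)"
      and "u0 = Zpin w a (F - {x}) (pin x False Es)"
    have x': "x \<notin> F - {x}" by simp
    have adm': "max_degree_le (Free ` (F - {x})) (Es + {#}) D"
      using max_degree_le_mono[OF adm, of "Free ` (F - {x})" Es] by auto
    have "u1 \<noteq> 0" "u0 \<noteq> 0"
      using IH[OF x] max_degree_le_pin[OF x', of _ Es "{#}"] adm'
      by (auto simp: nonvanishing_def u1_def u0_def)
    have "\<bar>Arg (u1 / u0)\<bar> \<le> real (degree Es (Free x)) * \<alpha>"
      using abs_Arg_pin_le[of "F - {x}" x Es "{#}"] IH[OF x] adm' by (simp add: u1_def u0_def)
    also have "\<dots> \<le> real D * \<alpha>" using adm x alpha_pos by (simp add: max_degree_le_def mult_right_mono)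
    also have "\<dots> < pi" by (rule D_alpha_less_pi)
    finally have "u1 / u0 \<noteq> -1" using Arg_of_real[of "-1"] by auto
    then have "u1 + u0 \<noteq> 0" using \<open>u0 \<noteq> 0\<close> by (auto simp: field_simps add_eq_0_iff)
    then show ?thesis using Zpin_split[OF \<open>finite F\<close> x] by (simp add: u1_def u0_def)
  qed
qed

lemma abs_Arg_flip_free_le:
  assumes "finite F" "x \<in> F" and nv: "nonvanishing (F - {x})" and fr: "flip_rotation_bounded (F - {x})"
    and adm: "max_degree_le (Free ` F) (add_mset (Pinned c, Free x) M) D"
  shows "\<bar>Arg (Zpin w a F (add_mset (Pinned c, Free x) M) / Zpin w a F (add_mset (Pinned c', Free x) M))\<bar> \<le> \<alpha>"
proof -
  define u1 u0 where "u1 = Zpin w a (F - {x}) (pin x True M)"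
    and "u0 = Zpin w a (F - {x}) (pin x False M)"
  have x': "x \<notin> F - {x}" by simp
  have adm': "max_degree_le (Free ` (F - {x})) (M + {#}) D"
    using max_degree_le_mono[OF adm, of "Free ` (F - {x})" M] by auto
  have "\<bar>Arg (u1 / u0)\<bar> \<le> real (degree M (Free x)) * \<alpha>"
    using abs_Arg_pin_le[OF nv fr x' adm'] by (simp add: u1_def u0_def)
  also have "\<dots> \<le> (real D - 1) * \<alpha>"
  proof -
    have "1 + degree M (Free x) \<le> D" using adm \<open>x \<in> F\<close> by (auto simp: max_degree_le_def)
    then show ?thesis using alpha_pos by (intro mult_right_mono) auto
  qed
  finally have angle: "\<bar>Arg (u1 / u0)\<bar> \<le> (real D - 1) * \<alpha>" .
  have expand: "Zpin w a F (add_mset (Pinned b, Free x) M)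
      = edge_weight w a b True * u1 + edge_weight w a b False * u0" for b
    using Zpin_split[OF assms(1,2)] by (simp add: u1_def u0_def pin_edge_def)
  show ?thesis unfolding expand
    using angle D_minus_1_alpha_less_pi alpha_pos alpha_less_pi
      edge_weight_close edge_weight_close edge_weight_close edge_weight_close
    by (rule abs_Arg_perturbed_sums_le)
qed

lemma abs_Arg_flip_constant_le:
  assumes "q \<notin> Free ` F"
  shows "\<bar>Arg (Zpin w a F (add_mset (Pinned c, q) M) / Zpin w a F (add_mset (Pinned c', q) M))\<bar> \<le> \<alpha>"
proof -
  define k where "k = spin (\<lambda>_. undefined) q"
  have expand: "Zpin w a F (add_mset (Pinned b, q) M) = edge_weight w a b k * Zpin w a F M" for b
    by (rule Zpin_add_mset_constant) (use spin_outside[OF _ assms] in \<open>auto simp: k_def\<close>)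
  show ?thesis unfolding expand using abs_Arg_edge_weight_divide_le[of c k c' k] alpha_pos
    by (cases "Zpin w a F M = 0") (simp_all add: Arg_zero)
qed

lemma flip_rotation_bounded_step:
  assumes "finite F"
    and IH: "\<And>x. x \<in> F \<Longrightarrow> nonvanishing (F - {x}) \<and> flip_rotation_bounded (F - {x})"
  shows "flip_rotation_bounded F"
  unfolding flip_rotation_bounded_def
proof (intro allI impI)
  fix c c' q M assume adm: "max_degree_le (Free ` F) (add_mset (Pinned c, q) M) D"
  show "\<bar>Arg (Zpin w a F (add_mset (Pinned c, q) M) / Zpin w a F (add_mset (Pinned c', q) M))\<bar> \<le> \<alpha>"
  proof (cases "q \<in> Free ` F")
    case True
    then obtain x where "x \<in> F" "q = Free x" by blast
    then show ?thesis using abs_Arg_flip_free_le[OF assms(1)] IH adm by blast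
  next
    case False
    then show ?thesis by (rule abs_Arg_flip_constant_le)
  qed
qed

lemma nonvanishing_and_flip_rotation_bounded:
  assumes "finite F"
  shows "nonvanishing F \<and> flip_rotation_bounded F"
  using assms
proof (induction F rule: finite_psubset_induct)
  case (psubset F)
  then have "nonvanishing (F - {x}) \<and> flip_rotation_bounded (F - {x})" if "x \<in> F" for x
    using that by blast
  then show ?case using nonvanishing_step flip_rotation_bounded_step psubset by blast
qed

end

lemma max_degree_le_Free:
  "max_degree_le (Free ` V) (image_mset (map_prod Free Free) E) D \<longleftrightarrow> max_degree_le V E D"
  by (simp add: max_degree_le_def degree_def multiset.map_comp o_def)

lemma Zpin_Free:
  assumes "a \<noteq> 0"
  shows "Zpin w a V (image_mset (map_prod Free Free) E) = a ^ size E * Z_Ising V E (w / a)"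
proof -
  have "(\<Prod>e\<in>#E. edge_weight w a (\<sigma> (fst e)) (\<sigma> (snd e))) = a ^ size E * (w / a) ^ mono_edges E \<sigma>"
    for \<sigma> :: "'a \<Rightarrow> bool"
    using assms by (induction E) (auto simp: mono_edges_def edge_weight_def)
  then show ?thesis
    unfolding Zpin_def Z_Ising_def sum_distrib_left by (simp add: multiset.map_comp o_def)
qed

lemma sin_half_mult_cos_le:
  assumes "0 < x" "1 \<le> D" "real D * x \<le> 2 * pi"
  shows "sin (x / 2) * cos (real D * x / 2) \<le> sin (x / 2) * cos ((real D - 1) * x / 2)"
proof -
  have "x \<le> real D * x" using assms(1,2) mult_right_mono[of 1 "real D" x] by simp
  then have "0 \<le> sin (x / 2)" using assms by (intro sin_ge_zero) linarith+
  moreover have "cos (real D * x / 2) \<le> cos ((real D - 1) * x / 2)"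
    using assms by (intro cos_monotone_0_pi_le) (auto simp: algebra_simps)
  ultimately show ?thesis by (simp add: mult_left_mono)
qed

lemma sin_half_mult_cos_pos:
  assumes "0 < x" "1 \<le> D" "real D * x < pi"
  shows "0 < sin (x / 2) * cos ((real D - 1) * x / 2)"
proof -
  have "x \<le> real D * x" using assms(1,2) mult_right_mono[of 1 "real D" x] by simp
  moreover have "0 \<le> (real D - 1) * x" "(real D - 1) * x \<le> real D * x"
    using assms by (simp_all add: algebra_simps)
  ultimately show ?thesis using assms by (intro mult_pos_pos sin_gt_zero cos_gt_zero_pi) linarith+
qed

(* sin(x/2) cos((D-1) x/2) dominates the function defining delta_Delta and attains its maximum on
   the closure [0, 2 pi/(3 D)] of the range, at a point \<alpha> \<noteq> 0 because it vanishes at 0. *)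
lemma delta_Delta_le_sin_cos:
  assumes "0 < D"
  obtains \<alpha> where "0 < \<alpha>" "real D * \<alpha> < pi"
    "delta_Delta D \<le> sin (\<alpha> / 2) * cos ((real D - 1) * \<alpha> / 2)"
proof -
  define b where "b = 2 * pi / (3 * real D)"
  define g where "g = (\<lambda>x. sin (x / 2) * cos ((real D - 1) * x / 2))"
  have b_pos: "0 < b" and Db: "real D * b = 2 * pi / 3" using assms by (simp_all add: b_def)
  have "continuous_on {0..b} g" unfolding g_def by (intro continuous_intros) auto
  then obtain \<alpha> where \<alpha>: "\<alpha> \<in> {0..b}" and max: "\<And>x. x \<in> {0..b} \<Longrightarrow> g x \<le> g \<alpha>"
    using continuous_attains_sup[of "{0..b}" g] b_pos by auto
  have "delta_Delta D \<le> g \<alpha>"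
    unfolding delta_Delta_def
  proof (rule cSUP_least)
    show "{0<..<2 * pi / (3 * real D)} \<noteq> {}" using b_pos by (simp add: b_def)
    fix x assume "x \<in> {0<..<2 * pi / (3 * real D)}"
    then have x: "0 < x" "x \<le> b" by (auto simp: b_def)
    moreover have "real D * x \<le> real D * b" using x by (intro mult_left_mono) auto
    ultimately show "sin (x / 2) * cos (real D * x / 2) \<le> g \<alpha>"
      using sin_half_mult_cos_le[of x D] max[of x] assms Db pi_gt_zero by (force simp: g_def)
  qed
  moreover have "0 < \<alpha>"
  proof (rule ccontr)
    assume "\<not> 0 < \<alpha>"
    then have "\<alpha> = 0" using \<alpha> by simp
    then show False
      using max[of b] sin_half_mult_cos_pos[of b D] b_pos Db assms pi_gt_zero by (simp add: g_def)
  qed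
  moreover have "real D * \<alpha> \<le> real D * b" using \<alpha> by (intro mult_left_mono) auto
  then have "real D * \<alpha> < pi" using Db pi_gt_zero by linarith
  ultimately show ?thesis using that by (simp add: g_def)
qed

theorem corollary2p8:
  fixes D :: nat and \<beta> :: complex and V :: "'a set" and E :: "('a \<times> 'a) multiset"
  assumes "D > 0"
    and "\<beta> \<in> (\<Union>a \<in> cball 1 (delta_Delta D). (\<lambda>w. w / a) ` cball 1 (delta_Delta D))"
    and "multigraph V E"
    and "max_degree_le V E D"
  shows "Z_Ising V E \<beta> \<noteq> 0"
proof -
  from assms(2) obtain a w where "a \<in> cball 1 (delta_Delta D)" "w \<in> cball 1 (delta_Delta D)"
    and \<beta>: "\<beta> = w / a"
    by blast
  then have a: "cmod (a - 1) \<le> delta_Delta D" and w: "cmod (w - 1) \<le> delta_Delta D"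
    by (simp_all add: dist_norm norm_minus_commute)
  obtain \<alpha> where "0 < \<alpha>" "real D * \<alpha> < pi"
    and \<delta>: "delta_Delta D \<le> sin (\<alpha> / 2) * cos ((real D - 1) * \<alpha> / 2)"
    using delta_Delta_le_sin_cos[OF assms(1)] by blast
  interpret ising_disk w a \<alpha> D
    using assms(1) \<open>0 < \<alpha>\<close> \<open>real D * \<alpha> < pi\<close> a w \<delta> by unfold_locales auto
  have "nonvanishing V"
    using assms(3) nonvanishing_and_flip_rotation_bounded by (auto simp: multigraph_def)
  then have "Zpin w a V (image_mset (map_prod Free Free) E) \<noteq> 0"
    using assms(4) by (simp add: nonvanishing_def max_degree_le_Free)
  moreover have "a \<noteq> 0" using edge_weight_nonzero[of True False] by (simp add: edge_weight_def)
  ultimately show ?thesis by (simp add: Zpin_Free \<beta>)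
qed

end
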